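(* Let $m$, $n$, $k$ be integers with $0 \le n < m \le N$ and $1 < k \le N$. Then \[ \int_{\Lambda} \frac{\prod_{i=1}^{n+1} y_i^2 \prod_{i=n+2}^{m} y_i}{y_1 - y_k}\, \Phi(y)\, dy = \begin{cases} 0 & \text{if } 2 \le k \le n+1,\\[2pt] \dfrac{1}{2}\displaystyle\int_{\Lambda} \prod_{i=1}^{n} y_i^2 \prod_{i=n+1}^{m} y_i \,\Phi(y)\, dy & \text{if } n+2 \le k \le m,\\[8pt] \displaystyle\int_{\Lambda} \prod_{i=1}^{n} y_i^2 \prod_{i=n+1}^{m} y_i \,\Phi(y)\, dy & \text{if } m+1 \le k \le N. \end{cases} \]
   Context: Let $N\ge 1$ be an integer and let $a,b,\rho$ be complex numbers with $\mathrm{Re}(a)>0$, $\mathrm{Re}(b)>0$ and $\mathrm{Re}(\rho) > -\min\{1/N,\ \mathrm{Re}(a)/(N-1),\ \mathrm{Re}(b)/(N-1)\}$ (replaced by $\mathrm{Re}(\rho)>-1$ when $N=1$). Let $\Lambda=(0,1)^N$ and for $y=(y_1,\dots,y_N)\in\Lambda$ put $\Phi(y)=\prod_{i=1}^N y_i^{a-1}(1-y_i)^{b-1}\prod_{1\le i<j\le N}|y_i-y_j|^{2\rho}$; $dy$ is Lebesgue measure on $\Lambda$. Empty products equal $1$. The parameters are assumed such that all integrals appearing converge absolutely. *)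

theory Defs
  imports "HOL-Analysis.Analysis"
begin

definition cube_measure :: "nat \<Rightarrow> (nat \<Rightarrow> real) measure" where
  "cube_measure N = Pi\<^sub>M {1..N} (\<lambda>_. restrict_space lborel {0<..<1::real})"

definition Phi :: "nat \<Rightarrow> complex \<Rightarrow> complex \<Rightarrow> complex \<Rightarrow> (nat \<Rightarrow> real) \<Rightarrow> complex" where
  "Phi N a b \<rho> y =
     (\<Prod>i\<in>{1..N}. complex_of_real (y i) powr (a - 1) * complex_of_real (1 - y i) powr (b - 1)) *
     (\<Prod>i\<in>{1..N}. \<Prod>j\<in>{i<..N}. complex_of_real \<bar>y i - y j\<bar> powr (2 * \<rho>))"

definition rho_admissible :: "nat \<Rightarrow> complex \<Rightarrow> complex \<Rightarrow> complex \<Rightarrow> bool" where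
  "rho_admissible N a b \<rho> =
     (if N = 1 then Re \<rho> > -1
      else Re \<rho> > - min (1 / real N) (min (Re a / (real N - 1)) (Re b / (real N - 1))))"

end

theory Submission
  imports Defs "HOL-Probability.Probability"
begin

text \<open>
  Lebesgue measure on the cube and the weight \<open>Phi\<close> are invariant under permutations of the
  coordinates. Swapping \<open>y\<^sub>1\<close> and \<open>y\<^sub>k\<close> turns the integrand \<open>M(y) / (y\<^sub>1 - y\<^sub>k) \<Phi>(y)\<close> into
  \<open>-M'(y) / (y\<^sub>1 - y\<^sub>k) \<Phi>(y)\<close>, where \<open>M'\<close> is \<open>M\<close> with the exponents of \<open>y\<^sub>1\<close> and \<open>y\<^sub>k\<close> exchanged.
  Hence twice the integral equals the integral of the divided difference
  \<open>(M - M') / (y\<^sub>1 - y\<^sub>k)\<close> against \<open>\<Phi>\<close>. With \<open>y\<^sub>1\<close> carrying exponent 2 this difference is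
  \<open>0\<close>, \<open>y\<^sub>1 y\<^sub>k R\<close> or \<open>(y\<^sub>1 + y\<^sub>k) R\<close> according as \<open>y\<^sub>k\<close> carries exponent 2, 1 or 0, and a second
  relabelling of the coordinates identifies the resulting integrals with the right-hand side.
\<close>

definition permute_coords :: "nat \<Rightarrow> (nat \<Rightarrow> nat) \<Rightarrow> (nat \<Rightarrow> real) \<Rightarrow> nat \<Rightarrow> real" where
  "permute_coords N \<sigma> y = (\<lambda>i\<in>{1..N}. y (\<sigma> i))"

lemma prob_space_unit_interval: "prob_space (restrict_space lborel {0<..<1::real})"
  by (rule prob_spaceI) (simp add: emeasure_restrict_space space_restrict_space)

lemma measurable_permute_coords:
  assumes "\<sigma> permutes {1..N}"
  shows "permute_coords N \<sigma> \<in> cube_measure N \<rightarrow>\<^sub>M cube_measure N"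
  unfolding cube_measure_def permute_coords_def
  by (intro measurable_restrict measurable_component_singleton)
    (use permutes_in_image[OF assms] in auto)

lemma distr_permute_coords:
  assumes "\<sigma> permutes {1..N}"
  shows "distr (cube_measure N) (cube_measure N) (permute_coords N \<sigma>) = cube_measure N"
  unfolding cube_measure_def permute_coords_def
  by (rule distr_PiM_reindex[where M="\<lambda>_. restrict_space lborel {0<..<1::real}"])
    (use prob_space_unit_interval permutes_inj_on[OF assms] permutes_in_image[OF assms] in auto)

lemma permute_coords_inv:
  assumes "\<sigma> permutes {1..N}" and "y \<in> space (cube_measure N)"
  shows "permute_coords N (inv \<sigma>) (permute_coords N \<sigma> y) = y"
proof -
  have "y \<in> extensional {1..N}"
    using assms(2) by (simp add: cube_measure_def space_PiM PiE_def)
  then show ?thesis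
    using permutes_in_image[OF permutes_inv[OF assms(1)]]
    by (auto simp: permute_coords_def permutes_inverses[OF assms(1)] extensional_def)
qed

lemma integral_permute_coords:
  fixes g :: "(nat \<Rightarrow> real) \<Rightarrow> 'b::{banach, second_countable_topology}"
  assumes \<sigma>: "\<sigma> permutes {1..N}"
  shows "(\<integral>y. g (permute_coords N \<sigma> y) \<partial>cube_measure N) = (\<integral>y. g y \<partial>cube_measure N)"
proof (cases "g \<in> borel_measurable (cube_measure N)")
  case True
  then show ?thesis
    using integral_distr[OF measurable_permute_coords[OF \<sigma>] True] distr_permute_coords[OF \<sigma>]
    by simp
next
  case False
  have "(\<lambda>y. g (permute_coords N \<sigma> y)) \<notin> borel_measurable (cube_measure N)"
  proof
    assume "(\<lambda>y. g (permute_coords N \<sigma> y)) \<in> borel_measurable (cube_measure N)"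
    then have "(\<lambda>y. g (permute_coords N \<sigma> (permute_coords N (inv \<sigma>) y))) \<in> borel_measurable (cube_measure N)"
      using measurable_compose[OF measurable_permute_coords[OF permutes_inv[OF \<sigma>]]] by blast
    then have "g \<in> borel_measurable (cube_measure N)"
      by (rule measurable_cong[THEN iffD1, rotated])
        (use permute_coords_inv[OF permutes_inv[OF \<sigma>]] in \<open>simp add: inv_inv_eq permutes_bij[OF \<sigma>]\<close>)
    with False show False ..
  qed
  with False show ?thesis
    by (metis borel_measurable_integrable not_integrable_integral_eq)
qed

lemma integrable_permute_coords:
  fixes g :: "(nat \<Rightarrow> real) \<Rightarrow> 'b::{banach, second_countable_topology}"
  assumes \<sigma>: "\<sigma> permutes {1..N}" and g: "integrable (cube_measure N) g"
  shows "integrable (cube_measure N) (\<lambda>y. g (permute_coords N \<sigma> y))"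
  using integrable_distr_eq[OF measurable_permute_coords[OF \<sigma>] borel_measurable_integrable[OF g]]
    distr_permute_coords[OF \<sigma>] g
  by simp

lemma min_max_doubleton: "{min x y, max x y} = {x, y :: 'a::linorder}"
  by (cases "x \<le> y") (auto simp: min_def max_def)

lemma prod_ordered_pairs_permute:
  fixes w :: "'a::linorder \<Rightarrow> 'a \<Rightarrow> 'b::comm_monoid_mult"
  assumes \<sigma>: "\<sigma> permutes A" and "finite A" and sym: "\<And>i j. w i j = w j i"
  shows "(\<Prod>(i, j)\<in>{(i, j)\<in>A \<times> A. i < j}. w (\<sigma> i) (\<sigma> j)) = (\<Prod>(i, j)\<in>{(i, j)\<in>A \<times> A. i < j}. w i j)"
proof -
  let ?P = "{(i, j)\<in>A \<times> A. i < j}"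
  define \<phi> where "\<phi> = (\<lambda>(i, j). (min (\<sigma> i) (\<sigma> j), max (\<sigma> i) (\<sigma> j)))"
  have inj: "\<sigma> i = \<sigma> j \<longleftrightarrow> i = j" for i j
    using permutes_inj[OF \<sigma>] by (rule inj_eq)
  have inj_\<phi>: "inj_on \<phi> ?P"
  proof (rule inj_onI, clarsimp simp: \<phi>_def)
    fix i j i' j' assume "i < j" "i' < j'"
      "min (\<sigma> i) (\<sigma> j) = min (\<sigma> i') (\<sigma> j')" "max (\<sigma> i) (\<sigma> j) = max (\<sigma> i') (\<sigma> j')"
    then have "{\<sigma> i, \<sigma> j} = {\<sigma> i', \<sigma> j'}"
      using min_max_doubleton[of "\<sigma> i" "\<sigma> j"] min_max_doubleton[of "\<sigma> i'" "\<sigma> j'"] by simp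
    then have "{i, j} = {i', j'}"
      by (auto simp: doubleton_eq_iff inj)
    with \<open>i < j\<close> \<open>i' < j'\<close> show "i = i' \<and> j = j'"
      by (auto simp: doubleton_eq_iff)
  qed
  have \<phi>_into: "\<phi> p \<in> ?P" if p_in: "p \<in> ?P" for p
  proof -
    obtain i j where p: "p = (i, j)" "i \<in> A" "j \<in> A" "i < j"
      using p_in by blast
    then have "\<sigma> i \<noteq> \<sigma> j"
      by (simp add: inj)
    then have "min (\<sigma> i) (\<sigma> j) < max (\<sigma> i) (\<sigma> j)"
      by (cases rule: linorder_cases[of "\<sigma> i" "\<sigma> j"]) (simp_all add: min_def max_def linorder_not_le[symmetric])
    with p show ?thesis
      by (simp add: \<phi>_def permutes_in_image[OF \<sigma>] min_def max_def)
  qed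
  have "finite ?P"
    by (rule finite_subset[of _ "A \<times> A"]) (use \<open>finite A\<close> in auto)
  moreover have "\<phi> ` ?P \<subseteq> ?P"
    using \<phi>_into by (rule image_subsetI)
  ultimately have "\<phi> ` ?P = ?P"
    using inj_\<phi> by (rule endo_inj_surj)
  then have "(\<Prod>(i, j)\<in>?P. w i j) = (\<Prod>p\<in>?P. (\<lambda>(i, j). w i j) (\<phi> p))"
    using prod.reindex[OF inj_\<phi>, of "\<lambda>(i, j). w i j"] by simp
  also have "\<dots> = (\<Prod>(i, j)\<in>?P. w (\<sigma> i) (\<sigma> j))"
    by (intro prod.cong) (auto simp: \<phi>_def min_def max_def sym)
  finally show ?thesis ..
qed

lemma prod_upper_triangle:
  fixes N :: nat
  shows "(\<Prod>i\<in>{1..N}. \<Prod>j\<in>{i<..N}. f i j) = (\<Prod>(i, j)\<in>{(i, j)\<in>{1..N} \<times> {1..N}. i < j}. f i j)"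
proof -
  have "{(i, j)\<in>{1..N} \<times> {1..N}. i < j} = (SIGMA i:{1..N}. {i<..N})"
    by (auto intro: order.strict_trans1)
  then show ?thesis
    by (simp add: prod.Sigma)
qed

lemma Phi_permute_coords:
  assumes \<sigma>: "\<sigma> permutes {1..N}"
  shows "Phi N a b \<rho> (permute_coords N \<sigma> y) = Phi N a b \<rho> y"
proof -
  let ?u = "\<lambda>x. complex_of_real x powr (a - 1) * complex_of_real (1 - x) powr (b - 1)"
  let ?w = "\<lambda>i j. complex_of_real \<bar>y i - y j\<bar> powr (2 * \<rho>)"
  have "(\<Prod>i\<in>{1..N}. ?u (permute_coords N \<sigma> y i)) = (\<Prod>i\<in>{1..N}. ?u (y (\<sigma> i)))"
    by (simp add: permute_coords_def)
  also have "\<dots> = (\<Prod>i\<in>{1..N}. ?u (y i))"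
    by (rule prod.permute[OF \<sigma>, symmetric, unfolded comp_def])
  finally have single: "(\<Prod>i\<in>{1..N}. ?u (permute_coords N \<sigma> y i)) = (\<Prod>i\<in>{1..N}. ?u (y i))" .
  have "(\<Prod>i\<in>{1..N}. \<Prod>j\<in>{i<..N}. complex_of_real \<bar>permute_coords N \<sigma> y i - permute_coords N \<sigma> y j\<bar> powr (2 * \<rho>))
      = (\<Prod>(i, j)\<in>{(i, j)\<in>{1..N} \<times> {1..N}. i < j}. ?w (\<sigma> i) (\<sigma> j))"
    unfolding prod_upper_triangle by (intro prod.cong) (auto simp: permute_coords_def)
  also have "\<dots> = (\<Prod>(i, j)\<in>{(i, j)\<in>{1..N} \<times> {1..N}. i < j}. ?w i j)"
    by (rule prod_ordered_pairs_permute[OF \<sigma>]) (simp_all add: abs_minus_commute)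
  finally show ?thesis
    unfolding Phi_def single prod_upper_triangle by simp
qed

text \<open>Isabelle's \<open>0 powr z = 0\<close> makes \<open>Phi\<close> vanish on the diagonals whatever the sign of \<open>Re \<rho>\<close>;
  this is harmless, the diagonals being null sets, and it disposes of the junk value \<open>x / 0 = 0\<close>
  of the quotient integrands below.\<close>

lemma Phi_eq_0_if_coords_eq:
  assumes "i \<in> {1..N}" "j \<in> {1..N}" "i \<noteq> j" "y i = y j"
  shows "Phi N a b \<rho> y = 0"
proof -
  obtain i' j' where ij: "i' \<in> {1..N}" "j' \<in> {i'<..N}" "y i' = y j'"
    using assms by (cases i j rule: linorder_cases) auto
  have "\<exists>i'\<in>{1..N}. (\<Prod>j'\<in>{i'<..N}. complex_of_real \<bar>y i' - y j'\<bar> powr (2 * \<rho>)) = 0"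
  proof
    show "(\<Prod>j\<in>{i'<..N}. complex_of_real \<bar>y i' - y j\<bar> powr (2 * \<rho>)) = 0"
      using ij by (intro prod_zero) (auto intro: bexI[of _ j'])
  qed (fact ij(1))
  then have "(\<Prod>i\<in>{1..N}. \<Prod>j\<in>{i<..N}. complex_of_real \<bar>y i - y j\<bar> powr (2 * \<rho>)) = 0"
    by (rule prod_zero[OF finite_atLeastAtMost])
  then show ?thesis
    by (simp add: Phi_def)
qed

definition coord_monomial :: "nat \<Rightarrow> (nat \<Rightarrow> nat) \<Rightarrow> (nat \<Rightarrow> real) \<Rightarrow> real" where
  "coord_monomial N e y = (\<Prod>i\<in>{1..N}. y i ^ e i)"

lemma coord_monomial_cong:
  assumes "\<And>i. i \<in> {1..N} \<Longrightarrow> e i = e' i"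
  shows "coord_monomial N e y = coord_monomial N e' y"
  unfolding coord_monomial_def using assms by (intro prod.cong) auto

lemma coord_monomial_permute_coords:
  assumes \<sigma>: "\<sigma> permutes {1..N}"
  shows "coord_monomial N (e \<circ> \<sigma>) (permute_coords N \<sigma> y) = coord_monomial N e y"
proof -
  have "coord_monomial N (e \<circ> \<sigma>) (permute_coords N \<sigma> y) = (\<Prod>i\<in>{1..N}. y (\<sigma> i) ^ e (\<sigma> i))"
    unfolding coord_monomial_def permute_coords_def by (intro prod.cong) auto
  also have "\<dots> = coord_monomial N e y"
    unfolding coord_monomial_def using prod.permute[OF \<sigma>, where g="\<lambda>i. y i ^ e i"] by (simp add: comp_def)
  finally show ?thesis .
qed

lemma coord_monomial_split:
  assumes "p \<in> {1..N}" "q \<in> {1..N}" "p \<noteq> q" and "\<And>i. i \<in> {1..N} - {p, q} \<Longrightarrow> e' i = e i"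
  shows "coord_monomial N e' y = y p ^ e' p * y q ^ e' q * (\<Prod>i\<in>{1..N} - {p, q}. y i ^ e i)"
proof -
  have "{1..N} = insert p (insert q ({1..N} - {p, q}))"
    using assms by auto
  then have "coord_monomial N e' y = y p ^ e' p * y q ^ e' q * (\<Prod>i\<in>{1..N} - {p, q}. y i ^ e' i)"
    unfolding coord_monomial_def using assms(3) by (metis (no_types) Diff_iff finite_atLeastAtMost
        finite_insert insert_iff mult.assoc prod.insert)
  also have "(\<Prod>i\<in>{1..N} - {p, q}. y i ^ e' i) = (\<Prod>i\<in>{1..N} - {p, q}. y i ^ e i)"
    using assms(4) by (intro prod.cong) auto
  finally show ?thesis .
qed

definition block_exponents :: "nat \<Rightarrow> nat \<Rightarrow> nat \<Rightarrow> nat" where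
  "block_exponents r s i = (if i \<le> r then 2 else if i \<le> s then 1 else 0)"

lemma coord_monomial_block_exponents:
  assumes "r \<le> s" "s \<le> N"
  shows "coord_monomial N (block_exponents r s) y = (\<Prod>i\<in>{1..r}. y i ^ 2) * (\<Prod>i\<in>{r+1..s}. y i)"
proof -
  let ?e = "block_exponents r s"
  have U: "{1..N} = {1..r} \<union> ({r+1..s} \<union> {s+1..N})"
    using assms by auto
  have disj: "{1..r} \<inter> ({r+1..s} \<union> {s+1..N}) = {}" "{r+1..s} \<inter> {s+1..N} = {}"
    using assms by auto
  have "coord_monomial N ?e y
      = (\<Prod>i\<in>{1..r}. y i ^ ?e i) * ((\<Prod>i\<in>{r+1..s}. y i ^ ?e i) * (\<Prod>i\<in>{s+1..N}. y i ^ ?e i))"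
    unfolding coord_monomial_def U using disj by (simp add: prod.union_disjoint)
  also have "(\<Prod>i\<in>{1..r}. y i ^ ?e i) = (\<Prod>i\<in>{1..r}. y i ^ 2)"
    by (rule prod.cong) (auto simp: block_exponents_def)
  also have "(\<Prod>i\<in>{r+1..s}. y i ^ ?e i) = (\<Prod>i\<in>{r+1..s}. y i)"
    by (rule prod.cong) (auto simp: block_exponents_def)
  also have "(\<Prod>i\<in>{s+1..N}. y i ^ ?e i) = 1"
    using assms by (intro prod.neutral) (auto simp: block_exponents_def)
  finally show ?thesis
    by simp
qed

lemma block_exponents_transpose:
  assumes "r < s"
  shows "(block_exponents (r + 1) s)(1 := 1) = block_exponents r s \<circ> Transposition.transpose 1 (r + 1)"
  using assms by (auto simp: fun_eq_iff block_exponents_def Transposition.transpose_def)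

lemma monomial_Phi_relabel:
  assumes \<sigma>: "\<sigma> permutes {1..N}" and e: "\<forall>i\<in>{1..N}. e' i = e (\<sigma> i)"
  shows "complex_of_real (coord_monomial N e' y) * Phi N a b \<rho> y
       = complex_of_real (coord_monomial N e (permute_coords N (inv \<sigma>) y))
         * Phi N a b \<rho> (permute_coords N (inv \<sigma>) y)"
proof -
  have \<sigma>': "inv \<sigma> permutes {1..N}"
    by (rule permutes_inv[OF \<sigma>])
  have "coord_monomial N e' y = coord_monomial N (e' \<circ> inv \<sigma>) (permute_coords N (inv \<sigma>) y)"
    by (rule coord_monomial_permute_coords[OF \<sigma>', symmetric])
  also have "\<dots> = coord_monomial N e (permute_coords N (inv \<sigma>) y)"
    using e permutes_in_image[OF \<sigma>'] by (intro coord_monomial_cong) (simp add: permutes_inverses[OF \<sigma>])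
  finally show ?thesis
    by (simp add: Phi_permute_coords[OF \<sigma>'])
qed

lemma integral_monomial_Phi_relabel:
  assumes "\<sigma> permutes {1..N}" and "\<forall>i\<in>{1..N}. e' i = e (\<sigma> i)"
  shows "(\<integral>y. complex_of_real (coord_monomial N e' y) * Phi N a b \<rho> y \<partial>cube_measure N)
       = (\<integral>y. complex_of_real (coord_monomial N e y) * Phi N a b \<rho> y \<partial>cube_measure N)"
proof -
  have "complex_of_real (coord_monomial N e' y) * Phi N a b \<rho> y
      = complex_of_real (coord_monomial N e (permute_coords N (inv \<sigma>) y))
        * Phi N a b \<rho> (permute_coords N (inv \<sigma>) y)" for y
    using assms by (rule monomial_Phi_relabel)
  then show ?thesis
    using integral_permute_coords[OF permutes_inv[OF assms(1)],
        where g="\<lambda>y. complex_of_real (coord_monomial N e y) * Phi N a b \<rho> y"]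
    by simp
qed

lemma integrable_monomial_Phi_relabel:
  assumes "\<sigma> permutes {1..N}" and "\<forall>i\<in>{1..N}. e' i = e (\<sigma> i)"
    and "integrable (cube_measure N) (\<lambda>y. complex_of_real (coord_monomial N e y) * Phi N a b \<rho> y)"
  shows "integrable (cube_measure N) (\<lambda>y. complex_of_real (coord_monomial N e' y) * Phi N a b \<rho> y)"
proof -
  have "complex_of_real (coord_monomial N e' y) * Phi N a b \<rho> y
      = complex_of_real (coord_monomial N e (permute_coords N (inv \<sigma>) y))
        * Phi N a b \<rho> (permute_coords N (inv \<sigma>) y)" for y
    using assms(1,2) by (rule monomial_Phi_relabel)
  then show ?thesis
    using integrable_permute_coords[OF permutes_inv[OF assms(1)] assms(3)] by simp
qed

definition quotient_integrand ::
    "nat \<Rightarrow> complex \<Rightarrow> complex \<Rightarrow> complex \<Rightarrow> (nat \<Rightarrow> nat) \<Rightarrow> nat \<Rightarrow> nat \<Rightarrow> (nat \<Rightarrow> real) \<Rightarrow> complex" where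
  "quotient_integrand N a b \<rho> e p q y =
     complex_of_real (coord_monomial N e y / (y p - y q)) * Phi N a b \<rho> y"

lemma quotient_integrand_transpose:
  assumes "p \<in> {1..N}" "q \<in> {1..N}"
  shows "quotient_integrand N a b \<rho> e p q (permute_coords N (Transposition.transpose p q) y)
       = - quotient_integrand N a b \<rho> (e \<circ> Transposition.transpose p q) p q y"
proof -
  let ?\<tau> = "Transposition.transpose p q"
  have \<tau>: "?\<tau> permutes {1..N}"
    using assms by (rule permutes_swap_id)
  have "coord_monomial N e (permute_coords N ?\<tau> y) = coord_monomial N (e \<circ> ?\<tau> \<circ> ?\<tau>) (permute_coords N ?\<tau> y)"
    by (simp add: comp_def)
  also have "\<dots> = coord_monomial N (e \<circ> ?\<tau>) y"
    by (rule coord_monomial_permute_coords[OF \<tau>])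
  finally have "coord_monomial N e (permute_coords N ?\<tau> y) = coord_monomial N (e \<circ> ?\<tau>) y" .
  moreover have "permute_coords N ?\<tau> y p = y q" "permute_coords N ?\<tau> y q = y p"
    using assms by (simp_all add: permute_coords_def)
  moreover have "c / (y q - y p) = - (c / (y p - y q))" for c :: real
    by (simp add: minus_divide_right)
  ultimately show ?thesis
    unfolding quotient_integrand_def Phi_permute_coords[OF \<tau>] by simp
qed

lemma integral_quotient_integrand_eq_0:
  assumes "p \<in> {1..N}" "q \<in> {1..N}" "e p = e q"
  shows "(\<integral>y. quotient_integrand N a b \<rho> e p q y \<partial>cube_measure N) = 0"
proof -
  let ?f = "quotient_integrand N a b \<rho> e p q"
  have "e \<circ> Transposition.transpose p q = e"
    using assms(3) by (auto simp: fun_eq_iff Transposition.transpose_def)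
  then have "?f (permute_coords N (Transposition.transpose p q) y) = - ?f y" for y
    using quotient_integrand_transpose[OF assms(1,2)] by metis
  then have "(\<integral>y. ?f y \<partial>cube_measure N) = - (\<integral>y. ?f y \<partial>cube_measure N)"
    using integral_permute_coords[OF permutes_swap_id[OF assms(1,2)], where g = ?f] by simp
  then show ?thesis
    by simp
qed

lemma integral_quotient_integrand_divided_difference:
  assumes "p \<in> {1..N}" "q \<in> {1..N}" "p \<noteq> q"
    and integrable: "integrable (cube_measure N) (quotient_integrand N a b \<rho> e p q)"
    and divided_difference:
      "\<And>y. coord_monomial N e y - coord_monomial N (e \<circ> Transposition.transpose p q) y = (y p - y q) * Q y"
  shows "2 * (\<integral>y. quotient_integrand N a b \<rho> e p q y \<partial>cube_measure N)
       = (\<integral>y. complex_of_real (Q y) * Phi N a b \<rho> y \<partial>cube_measure N)"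
proof -
  let ?\<tau> = "Transposition.transpose p q"
  let ?f = "quotient_integrand N a b \<rho> e p q" and ?g = "quotient_integrand N a b \<rho> (e \<circ> ?\<tau>) p q"
  have \<tau>: "?\<tau> permutes {1..N}"
    using assms(1,2) by (rule permutes_swap_id)
  have swap: "?f (permute_coords N ?\<tau> y) = - ?g y" for y
    using assms(1,2) by (rule quotient_integrand_transpose)
  have "integrable (cube_measure N) ?g"
    using integrable_permute_coords[OF \<tau> integrable] unfolding swap by simp
  moreover have "(\<integral>y. ?f y \<partial>cube_measure N) = - (\<integral>y. ?g y \<partial>cube_measure N)"
    using integral_permute_coords[OF \<tau>, where g = ?f] unfolding swap by simp
  ultimately have "2 * (\<integral>y. ?f y \<partial>cube_measure N) = (\<integral>y. ?f y - ?g y \<partial>cube_measure N)"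
    using integrable by simp
  also have "\<dots> = (\<integral>y. complex_of_real (Q y) * Phi N a b \<rho> y \<partial>cube_measure N)"
  proof (rule Bochner_Integration.integral_cong[OF refl])
    fix y
    show "?f y - ?g y = complex_of_real (Q y) * Phi N a b \<rho> y"
    proof (cases "y p = y q")
      case True
      then have "Phi N a b \<rho> y = 0"
        using assms(1-3) by (rule Phi_eq_0_if_coords_eq[rotated 3])
      then show ?thesis
        by (simp add: quotient_integrand_def)
    next
      case False
      then have "coord_monomial N e y / (y p - y q) - coord_monomial N (e \<circ> ?\<tau>) y / (y p - y q) = Q y"
        by (simp add: diff_divide_distrib[symmetric] divided_difference)
      then show ?thesis
        unfolding quotient_integrand_def by (metis left_diff_distrib of_real_diff)
    qed
  qed
  finally show ?thesis .
qed

lemma integral_quotient_integrand_eq_half: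
  assumes pq: "p \<in> {1..N}" "q \<in> {1..N}" "p \<noteq> q" and "e p = 2" "e q = 1"
    and "integrable (cube_measure N) (quotient_integrand N a b \<rho> e p q)"
  shows "(\<integral>y. quotient_integrand N a b \<rho> e p q y \<partial>cube_measure N)
       = 1 / 2 * (\<integral>y. complex_of_real (coord_monomial N (e(p := 1)) y) * Phi N a b \<rho> y \<partial>cube_measure N)"
proof -
  have "coord_monomial N e y - coord_monomial N (e \<circ> Transposition.transpose p q) y
      = (y p - y q) * coord_monomial N (e(p := 1)) y" for y
  proof -
    let ?R = "\<Prod>i\<in>{1..N} - {p, q}. y i ^ e i"
    have "coord_monomial N e y = y p ^ 2 * y q * ?R"
      using coord_monomial_split[OF pq, of e e] assms by simp
    moreover have "coord_monomial N (e \<circ> Transposition.transpose p q) y = y p * y q ^ 2 * ?R"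
      using coord_monomial_split[OF pq, of "e \<circ> Transposition.transpose p q" e] assms by simp
    moreover have "coord_monomial N (e(p := 1)) y = y p * y q * ?R"
      using coord_monomial_split[OF pq, of "e(p := 1)" e] assms by simp
    ultimately show ?thesis
      by (simp add: algebra_simps power2_eq_square)
  qed
  from integral_quotient_integrand_divided_difference[OF pq assms(6) this] show ?thesis
    by (simp add: mult.commute)
qed

lemma integral_quotient_integrand_eq:
  assumes pq: "p \<in> {1..N}" "q \<in> {1..N}" "p \<noteq> q" and "e p = 2" "e q = 0"
    and "integrable (cube_measure N) (quotient_integrand N a b \<rho> e p q)"
    and integrable_e1: "integrable (cube_measure N)
          (\<lambda>y. complex_of_real (coord_monomial N (e(p := 1)) y) * Phi N a b \<rho> y)"
  shows "(\<integral>y. quotient_integrand N a b \<rho> e p q y \<partial>cube_measure N)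
       = (\<integral>y. complex_of_real (coord_monomial N (e(p := 1)) y) * Phi N a b \<rho> y \<partial>cube_measure N)"
proof -
  let ?\<tau> = "Transposition.transpose p q" and ?e1 = "e(p := 1)" and ?e2 = "e(p := 0, q := 1)"
  let ?h = "\<lambda>e y. complex_of_real (coord_monomial N e y) * Phi N a b \<rho> y"
  have "coord_monomial N e y - coord_monomial N (e \<circ> ?\<tau>) y
      = (y p - y q) * (coord_monomial N ?e1 y + coord_monomial N ?e2 y)" for y
  proof -
    let ?R = "\<Prod>i\<in>{1..N} - {p, q}. y i ^ e i"
    have "coord_monomial N e y = y p ^ 2 * ?R"
      using coord_monomial_split[OF pq, of e e] assms by simp
    moreover have "coord_monomial N (e \<circ> ?\<tau>) y = y q ^ 2 * ?R"
      using coord_monomial_split[OF pq, of "e \<circ> ?\<tau>" e] assms by simp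
    moreover have "coord_monomial N ?e1 y = y p * ?R"
      using coord_monomial_split[OF pq, of ?e1 e] assms by simp
    moreover have "coord_monomial N ?e2 y = y q * ?R"
      using coord_monomial_split[OF pq, of ?e2 e] assms by simp
    ultimately show ?thesis
      by (simp add: algebra_simps power2_eq_square)
  qed
  from integral_quotient_integrand_divided_difference[OF pq assms(6) this]
  have "2 * (\<integral>y. quotient_integrand N a b \<rho> e p q y \<partial>cube_measure N)
      = (\<integral>y. ?h ?e1 y + ?h ?e2 y \<partial>cube_measure N)"
    by (simp add: distrib_right)
  moreover have \<tau>: "?\<tau> permutes {1..N}" and relabel: "\<forall>i\<in>{1..N}. ?e2 i = ?e1 (?\<tau> i)"
    using pq assms(5) by (auto simp: permutes_swap_id Transposition.transpose_def)
  moreover have "integrable (cube_measure N) (?h ?e2)"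
    using \<tau> relabel integrable_e1 by (rule integrable_monomial_Phi_relabel)
  moreover have "(\<integral>y. ?h ?e2 y \<partial>cube_measure N) = (\<integral>y. ?h ?e1 y \<partial>cube_measure N)"
    using \<tau> relabel by (rule integral_monomial_Phi_relabel)
  ultimately show ?thesis
    using integrable_e1 by simp
qed

theorem lemma1:
  fixes N m n k :: nat and a b \<rho> :: complex
  assumes "N \<ge> 1" and "Re a > 0" and "Re b > 0" and "rho_admissible N a b \<rho>"
    and "n < m" and "m \<le> N" and "1 < k" and "k \<le> N"
    and "integrable (cube_measure N)
           (\<lambda>y. complex_of_real ((\<Prod>i\<in>{1..n+1}. y i ^ 2) * (\<Prod>i\<in>{n+2..m}. y i) / (y 1 - y k))
                 * Phi N a b \<rho> y)"
    and "integrable (cube_measure N)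
           (\<lambda>y. complex_of_real ((\<Prod>i\<in>{1..n}. y i ^ 2) * (\<Prod>i\<in>{n+1..m}. y i)) * Phi N a b \<rho> y)"
  shows "(\<integral>y. complex_of_real ((\<Prod>i\<in>{1..n+1}. y i ^ 2) * (\<Prod>i\<in>{n+2..m}. y i) / (y 1 - y k))
                 * Phi N a b \<rho> y \<partial>cube_measure N) =
    (if k \<le> n + 1 then 0
     else if k \<le> m then
       1 / 2 * (\<integral>y. complex_of_real ((\<Prod>i\<in>{1..n}. y i ^ 2) * (\<Prod>i\<in>{n+1..m}. y i)) * Phi N a b \<rho> y \<partial>cube_measure N)
     else (\<integral>y. complex_of_real ((\<Prod>i\<in>{1..n}. y i ^ 2) * (\<Prod>i\<in>{n+1..m}. y i)) * Phi N a b \<rho> y \<partial>cube_measure N))"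
proof -
  let ?e = "block_exponents (n + 1) m" and ?\<tau> = "Transposition.transpose 1 (n + 1)"
  let ?h = "\<lambda>e y. complex_of_real (coord_monomial N e y) * Phi N a b \<rho> y"
  have F: "(\<lambda>y. complex_of_real ((\<Prod>i\<in>{1..n+1}. y i ^ 2) * (\<Prod>i\<in>{n+2..m}. y i) / (y 1 - y k))
      * Phi N a b \<rho> y) = quotient_integrand N a b \<rho> ?e 1 k"
    using coord_monomial_block_exponents[of "n + 1" m N] assms(5,6)
    by (simp add: fun_eq_iff quotient_integrand_def numeral_2_eq_2)
  have G: "(\<lambda>y. complex_of_real ((\<Prod>i\<in>{1..n}. y i ^ 2) * (\<Prod>i\<in>{n+1..m}. y i)) * Phi N a b \<rho> y)
      = ?h (block_exponents n m)"
    using coord_monomial_block_exponents[of n m N] assms(5,6) by simp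
  have pk: "1 \<in> {1..N}" "k \<in> {1..N}" "1 \<noteq> k"
    using assms by auto
  have \<tau>: "?\<tau> permutes {1..N}" and relabel: "\<forall>i\<in>{1..N}. (?e(1 := 1)) i = block_exponents n m (?\<tau> i)"
    using assms(5,6) block_exponents_transpose[of n m] by (auto intro: permutes_swap_id)
  have "integral\<^sup>L (cube_measure N) (?h (?e(1 := 1))) = integral\<^sup>L (cube_measure N) (?h (block_exponents n m))"
    using \<tau> relabel by (rule integral_monomial_Phi_relabel)
  moreover have "integrable (cube_measure N) (?h (?e(1 := 1)))"
    using \<tau> relabel assms(10)[unfolded G] by (rule integrable_monomial_Phi_relabel)
  moreover have "integrable (cube_measure N) (quotient_integrand N a b \<rho> ?e 1 k)"
    using assms(9) unfolding F .
  ultimately show ?thesis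
    unfolding F G
    using integral_quotient_integrand_eq_0[OF pk(1,2), of ?e] integral_quotient_integrand_eq_half[OF pk, of ?e]
      integral_quotient_integrand_eq[OF pk, of ?e] assms(5)
    by (auto simp: block_exponents_def)
qed

end
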